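(* Let $(\mathsf{K},d)$ be a compact metric space and let $\mathsf{S}_1\supseteq\mathsf{S}_2\supseteq\dots\supseteq\mathsf{S}_T$ be nonempty subsets of $\mathsf{K}$ such that $d_H(\mathsf{S}_i,\mathsf{S}_j)>\varepsilon$ for all $i\ne j$. Then $T\le N(\mathsf{K},\varepsilon)$.
   Context: $d_H$ is the Hausdorff distance induced by $d$. $N(\mathsf{K},r)$ is the $r$-packing number: the maximal $n$ such that there exist $\theta_1,\dots,\theta_n\in\mathsf{K}$ with $d(\theta_i,\theta_j)>r$ for all $i\ne j$. *)

theory Defs
  imports "HOL-Analysis.Analysis" "HOL-Library.Extended_Nat"
begin

text \<open>Used only for nonempty subsets of a compact set, where both suprema are finite.\<close>
definition hausdorff_dist :: "'a::metric_space set \<Rightarrow> 'a set \<Rightarrow> real" where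
  "hausdorff_dist A B = max (SUP a\<in>A. infdist a B) (SUP b\<in>B. infdist b A)"

definition packing_number :: "'a::metric_space set \<Rightarrow> real \<Rightarrow> enat" where
  "packing_number K r = Sup {enat n | n. \<exists>\<theta> :: nat \<Rightarrow> 'a.
      (\<forall>i<n. \<theta> i \<in> K) \<and> (\<forall>i<n. \<forall>j<n. i \<noteq> j \<longrightarrow> dist (\<theta> i) (\<theta> j) > r)}"

end

theory Submission
  imports Defs
begin

text \<open>Between consecutive sets of the chain the Hausdorff distance is attained on one side only:
  since \<open>S (i+1) \<subseteq> S i\<close>, some point \<open>p i \<in> S i\<close> lies farther than \<open>\<epsilon>\<close> from \<open>S (i+1)\<close>.
  For \<open>i < j\<close> the point \<open>p j\<close> lies in \<open>S j \<subseteq> S (i+1)\<close>, so \<open>dist (p i) (p j) > \<epsilon>\<close>,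
  and \<open>p 1, \<dots>, p T\<close> is an \<open>\<epsilon>\<close>-packing of \<open>K\<close>.\<close>

lemma bdd_above_infdist_image:
  fixes A B :: "'a::metric_space set"
  assumes "bounded A" "B \<noteq> {}"
  shows "bdd_above ((\<lambda>a. infdist a B) ` A)"
proof -
  obtain b where b: "b \<in> B" using assms(2) by blast
  obtain e where e: "\<forall>a\<in>A. dist b a \<le> e"
    using assms(1) bounded_any_center by blast
  show ?thesis
  proof (rule bdd_aboveI2)
    fix a assume "a \<in> A"
    have "infdist a B \<le> dist a b" using b by (rule infdist_le)
    also have "\<dots> \<le> e" using e \<open>a \<in> A\<close> by (simp add: dist_commute)
    finally show "infdist a B \<le> e" .
  qed
qed

lemma hausdorff_dist_of_subset:
  fixes A B :: "'a::metric_space set"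
  assumes "B \<subseteq> A" "B \<noteq> {}" "bounded A"
  shows "hausdorff_dist A B = (SUP a\<in>A. infdist a B)"
proof -
  have "(SUP b\<in>B. infdist b A) = 0"
    using assms(1,2) by (simp add: infdist_zero subset_iff)
  moreover have "0 \<le> (SUP a\<in>A. infdist a B)"
  proof -
    obtain b where "b \<in> B" using assms(2) by blast
    then have "infdist b B \<le> (SUP a\<in>A. infdist a B)"
      using assms by (intro cSUP_upper bdd_above_infdist_image) auto
    then show ?thesis using \<open>b \<in> B\<close> by simp
  qed
  ultimately show ?thesis unfolding hausdorff_dist_def by simp
qed

lemma exists_infdist_gt_if_hausdorff_dist_gt:
  fixes A B :: "'a::metric_space set"
  assumes "B \<subseteq> A" "B \<noteq> {}" "bounded A" "hausdorff_dist A B > \<epsilon>"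
  shows "\<exists>a\<in>A. infdist a B > \<epsilon>"
proof -
  have "A \<noteq> {}" using assms(1,2) by blast
  moreover have "\<epsilon> < (SUP a\<in>A. infdist a B)"
    using assms(4) unfolding hausdorff_dist_of_subset[OF assms(1-3)] .
  ultimately show ?thesis
    using less_cSUP_iff[OF _ bdd_above_infdist_image[OF assms(3,2)]] by blast
qed

lemma decreasing_chain_subset:
  assumes "\<And>k. m \<le> k \<Longrightarrow> k < n \<Longrightarrow> S (Suc k) \<subseteq> S k" "m \<le> i" "i \<le> j" "j \<le> n"
  shows "S j \<subseteq> S i"
  using assms(3,4)
proof (induction j rule: dec_induct)
  case base
  show ?case by simp
next
  case (step k)
  then have "S (Suc k) \<subseteq> S k" using assms(1,2) by simp
  then show ?case using step by (simp add: Suc_leD)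
qed

lemma enat_le_packing_number:
  assumes "\<forall>i<n. \<theta> i \<in> K" "\<forall>i<n. \<forall>j<n. i \<noteq> j \<longrightarrow> dist (\<theta> i) (\<theta> j) > r"
  shows "enat n \<le> packing_number K r"
  unfolding packing_number_def using assms by (intro Sup_upper) blast

lemma enat_le_packing_number_of_ordered_pairs:
  assumes "\<forall>i\<in>{1..n}. p i \<in> K"
    and "\<And>i j. 1 \<le> i \<Longrightarrow> i < j \<Longrightarrow> j \<le> n \<Longrightarrow> dist (p i) (p j) > r"
  shows "enat n \<le> packing_number K r"
proof (rule enat_le_packing_number[where \<theta> = "\<lambda>k. p (Suc k)"])
  show "\<forall>k<n. p (Suc k) \<in> K" using assms(1) by auto
  show "\<forall>k<n. \<forall>l<n. k \<noteq> l \<longrightarrow> dist (p (Suc k)) (p (Suc l)) > r"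
  proof (intro allI impI)
    fix k l assume "k < n" "l < n" "k \<noteq> l"
    then show "dist (p (Suc k)) (p (Suc l)) > r"
      using assms(2)[of "Suc k" "Suc l"] assms(2)[of "Suc l" "Suc k"]
      by (cases "k < l") (auto simp: dist_commute)
  qed
qed

lemma dist_gt_if_infdist_gt:
  assumes "y \<in> B" "infdist x B > r"
  shows "dist x y > r"
  using infdist_le[OF assms(1), of x] assms(2) by linarith

theorem lemma2:
  fixes K :: "'a::metric_space set" and S :: "nat \<Rightarrow> 'a set"
    and T :: nat and \<epsilon> :: real
  assumes "compact K"
    and "\<forall>i\<in>{1..T}. S i \<subseteq> K \<and> S i \<noteq> {}"
    and "\<forall>i\<in>{1..<T}. S (Suc i) \<subseteq> S i"
    and "\<forall>i\<in>{1..T}. \<forall>j\<in>{1..T}. i \<noteq> j \<longrightarrow> hausdorff_dist (S i) (S j) > \<epsilon>"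
  shows "enat T \<le> packing_number K \<epsilon>"
proof -
  have nested: "S j \<subseteq> S i" if "1 \<le> i" "i \<le> j" "j \<le> T" for i j
    using decreasing_chain_subset[of 1 T S i j] assms(3) that by auto
  have "\<exists>a\<in>S i. i < T \<longrightarrow> infdist a (S (Suc i)) > \<epsilon>" if "i \<in> {1..T}" for i
  proof (cases "i < T")
    case True
    then have "Suc i \<in> {1..T}" by simp
    then have "S (Suc i) \<subseteq> S i" "S (Suc i) \<noteq> {}" "hausdorff_dist (S i) (S (Suc i)) > \<epsilon>"
      using True that assms(2-4) by auto
    moreover have "bounded (S i)"
      using assms(1,2) that compact_imp_bounded bounded_subset by blast
    ultimately show ?thesis by (blast dest: exists_infdist_gt_if_hausdorff_dist_gt)
  qed (use assms(2) that in auto)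
  then obtain p where p: "\<forall>i\<in>{1..T}. p i \<in> S i \<and> (i < T \<longrightarrow> infdist (p i) (S (Suc i)) > \<epsilon>)"
    using bchoice[of "{1..T}" "\<lambda>i a. a \<in> S i \<and> (i < T \<longrightarrow> infdist a (S (Suc i)) > \<epsilon>)"] by blast
  show ?thesis
  proof (rule enat_le_packing_number_of_ordered_pairs)
    show "\<forall>i\<in>{1..T}. p i \<in> K" using p assms(2) by blast
    fix i j assume "1 \<le> i" "i < j" "j \<le> T"
    then have "p j \<in> S (Suc i)" "infdist (p i) (S (Suc i)) > \<epsilon>"
      using p nested[of "Suc i" j] by auto
    then show "dist (p i) (p j) > \<epsilon>" by (rule dist_gt_if_infdist_gt)
  qed
qed

end
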